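(* Let $K$ be a finite subgroup of $U(\mathbb{H})$ and consider the reflection system $L=K$. Then $H_K=[K,K]=\langle aba^{-1}b^{-1}: a,b\in K\rangle$, the commutator subgroup of $K$. Therefore the reflection groups in canonical form with $L=K$ are the groups $G_K(K,H)$ where $H$ is a subgroup of $K$ with $[K,K]\subseteq H\subseteq K$ (any such $H$ is automatically normal in $K$).
   Context: $\mathbb{H}$ is the real quaternion algebra with basis $1,i,j,k$ and $U(\mathbb{H})$ its group of unit quaternions. For a group $K$ and $a,b\in K$ put $a\circ b:=ab^{-1}a$. A reflection system for a finite group $K$ is a subset $L\subseteq K$ which generates $K$, is closed under $\circ$, and contains $1$ (so $K$ itself is a reflection system for $K$). For $b\in K$ let $M_b=\begin{pmatrix}0&b\\ b^{-1}&0\end{pmatrix}$. For a reflection system $L$, $H_L:=\{h\in K:\mathrm{diag}(h,1)\in\langle M_b: b\in L\rangle\}$. For $H\trianglelefteq K$ with $H\subseteq L$, $LH=L$, $G(K,L,H)$ is the subgroup of $U(\mathbb{H}^2)$ generated by $\mathrm{diag}(h,1),\mathrm{diag}(1,h)$ ($h\in H$) and $M_b$ ($b\in L$); it is in canonical form, written $G_K(L,H)$, if $\{b\in K: M_b\in G(K,L,H)\}=L$. *)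

theory Defs
  imports Main "HOL.Real"
begin

datatype quat = Quat (qre: real) (qi: real) (qj: real) (qk: real)

definition qzero :: quat where "qzero = Quat 0 0 0 0"
definition qone :: quat where "qone = Quat 1 0 0 0"

definition qmult :: "quat \<Rightarrow> quat \<Rightarrow> quat" where
  "qmult p q = Quat
     (qre p * qre q - qi p * qi q - qj p * qj q - qk p * qk q)
     (qre p * qi q + qi p * qre q + qj p * qk q - qk p * qj q)
     (qre p * qj q - qi p * qk q + qj p * qre q + qk p * qi q)
     (qre p * qk q + qi p * qj q - qj p * qi q + qk p * qre q)"

definition qadd :: "quat \<Rightarrow> quat \<Rightarrow> quat" where
  "qadd p q = Quat (qre p + qre q) (qi p + qi q) (qj p + qj q) (qk p + qk q)"

definition qcnj :: "quat \<Rightarrow> quat" where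
  "qcnj q = Quat (qre q) (- qi q) (- qj q) (- qk q)"

definition qnorm2 :: "quat \<Rightarrow> real" where
  "qnorm2 q = (qre q)^2 + (qi q)^2 + (qj q)^2 + (qk q)^2"

text \<open>U(H): unit quaternions; the inverse of a unit quaternion is its conjugate.\<close>
definition UH :: "quat set" where "UH = {q. qnorm2 q = 1}"

inductive_set qgen :: "quat set \<Rightarrow> quat set" for S where
  qgen_one: "qone \<in> qgen S"
| qgen_base: "s \<in> S \<Longrightarrow> s \<in> qgen S"
| qgen_mult: "a \<in> qgen S \<Longrightarrow> b \<in> qgen S \<Longrightarrow> qmult a b \<in> qgen S"
| qgen_inv: "a \<in> qgen S \<Longrightarrow> qcnj a \<in> qgen S"

definition is_subgroup_UH :: "quat set \<Rightarrow> bool" where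
  "is_subgroup_UH K \<longleftrightarrow> K \<subseteq> UH \<and> qone \<in> K \<and>
     (\<forall>a\<in>K. \<forall>b\<in>K. qmult a b \<in> K) \<and> (\<forall>a\<in>K. qcnj a \<in> K)"

definition is_subgroup_of :: "quat set \<Rightarrow> quat set \<Rightarrow> bool" where
  "is_subgroup_of H K \<longleftrightarrow> H \<subseteq> K \<and> qone \<in> H \<and>
     (\<forall>a\<in>H. \<forall>b\<in>H. qmult a b \<in> H) \<and> (\<forall>a\<in>H. qcnj a \<in> H)"

definition is_normal_in :: "quat set \<Rightarrow> quat set \<Rightarrow> bool" where
  "is_normal_in H K \<longleftrightarrow> is_subgroup_of H K \<and>
     (\<forall>k\<in>K. \<forall>h\<in>H. qmult (qmult k h) (qcnj k) \<in> H)"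

definition commutator_subgroup :: "quat set \<Rightarrow> quat set" where
  "commutator_subgroup K =
     qgen {qmult (qmult a b) (qmult (qcnj a) (qcnj b)) | a b. a \<in> K \<and> b \<in> K}"

definition qcirc :: "quat \<Rightarrow> quat \<Rightarrow> quat" where
  "qcirc a b = qmult (qmult a (qcnj b)) a"

definition reflection_system :: "quat set \<Rightarrow> quat set \<Rightarrow> bool" where
  "reflection_system K L \<longleftrightarrow> L \<subseteq> K \<and> qgen L = K \<and>
     (\<forall>a\<in>L. \<forall>b\<in>L. qcirc a b \<in> L) \<and> qone \<in> L"

type_synonym qmat = "quat \<times> quat \<times> quat \<times> quat"

definition mmult :: "qmat \<Rightarrow> qmat \<Rightarrow> qmat" where
  "mmult A B = (case A of (a11, a12, a21, a22) \<Rightarrow> case B of (b11, b12, b21, b22) \<Rightarrow>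
     (qadd (qmult a11 b11) (qmult a12 b21), qadd (qmult a11 b12) (qmult a12 b22),
      qadd (qmult a21 b11) (qmult a22 b21), qadd (qmult a21 b12) (qmult a22 b22)))"

text \<open>Conjugate transpose: the inverse of a matrix in U(H^2).\<close>
definition mstar :: "qmat \<Rightarrow> qmat" where
  "mstar A = (case A of (a11, a12, a21, a22) \<Rightarrow> (qcnj a11, qcnj a21, qcnj a12, qcnj a22))"

definition mone :: qmat where "mone = (qone, qzero, qzero, qone)"

definition mdiag :: "quat \<Rightarrow> quat \<Rightarrow> qmat" where
  "mdiag h k = (h, qzero, qzero, k)"

definition Mb :: "quat \<Rightarrow> qmat" where
  "Mb b = (qzero, b, qcnj b, qzero)"

inductive_set mgen :: "qmat set \<Rightarrow> qmat set" for S where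
  mgen_one: "mone \<in> mgen S"
| mgen_base: "s \<in> S \<Longrightarrow> s \<in> mgen S"
| mgen_mult: "a \<in> mgen S \<Longrightarrow> b \<in> mgen S \<Longrightarrow> mmult a b \<in> mgen S"
| mgen_inv: "a \<in> mgen S \<Longrightarrow> mstar a \<in> mgen S"

definition H_L :: "quat set \<Rightarrow> quat set \<Rightarrow> quat set" where
  "H_L K L = {h \<in> K. mdiag h qone \<in> mgen (Mb ` L)}"

definition G_KLH :: "quat set \<Rightarrow> quat set \<Rightarrow> quat set \<Rightarrow> qmat set" where
  "G_KLH K L H = mgen ((\<lambda>h. mdiag h qone) ` H \<union> (\<lambda>h. mdiag qone h) ` H \<union> Mb ` L)"

definition canonical_form :: "quat set \<Rightarrow> quat set \<Rightarrow> quat set \<Rightarrow> bool" where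
  "canonical_form K L H \<longleftrightarrow> {b \<in> K. Mb b \<in> G_KLH K L H} = L"

end

theory Submission
  imports Defs
begin

text \<open>Every element of \<open>\<langle>M\<^sub>b : b \<in> K\<rangle>\<close> is \<open>diag(x,y)\<close> or \<open>antidiag(x,y)\<close> with \<open>x, y \<in> K\<close>
  and \<open>xy \<in> [K,K]\<close>: these matrices contain the generators and are closed under products and
  inverses because \<open>K/[K,K]\<close> is abelian. Hence \<open>H\<^sub>K \<subseteq> [K,K]\<close>. Conversely
  \<open>M\<^sub>x M\<^sub>y = diag(x y\<^sup>-\<^sup>1, x\<^sup>-\<^sup>1 y)\<close>, and multiplying by \<open>M\<^sub>k M\<^sub>1 = diag(k, k\<^sup>-\<^sup>1)\<close> with
  \<open>k = x\<^sup>-\<^sup>1 y\<close> leaves \<open>diag([x, y\<^sup>-\<^sup>1], 1)\<close>. For a normal \<open>H'\<close>, the group \<open>G\<^sub>K(K,H')\<close> equals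
  \<open>G\<^sub>K(K,H)\<close> for \<open>H = {h \<in> K. diag(h,1) \<in> G\<^sub>K(K,H')}\<close>, which contains \<open>H\<^sub>K = [K,K]\<close>;
  conjugation by \<open>M\<^sub>1\<close> swaps the diagonal entries, so \<open>diag(1,h)\<close> comes for free.\<close>

lemma quat_eqI: "qre p = qre q \<Longrightarrow> qi p = qi q \<Longrightarrow> qj p = qj q \<Longrightarrow> qk p = qk q \<Longrightarrow> p = q"
  by (cases p; cases q) auto

lemma qmult_assoc: "qmult (qmult a b) c = qmult a (qmult b c)"
  by (rule quat_eqI) (simp_all add: qmult_def algebra_simps)

lemma qmult_one_left [simp]: "qmult qone a = a"
  and qmult_one_right [simp]: "qmult a qone = a"
  by (rule quat_eqI; simp add: qmult_def qone_def)+

lemma qmult_zero_left [simp]: "qmult qzero a = qzero"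
  and qmult_zero_right [simp]: "qmult a qzero = qzero"
  and qadd_zero_left [simp]: "qadd qzero a = a"
  and qadd_zero_right [simp]: "qadd a qzero = a"
  by (rule quat_eqI; simp add: qmult_def qadd_def qzero_def)+

lemma qcnj_qcnj [simp]: "qcnj (qcnj a) = a"
  and qcnj_one [simp]: "qcnj qone = qone"
  and qcnj_zero [simp]: "qcnj qzero = qzero"
  by (rule quat_eqI; simp add: qcnj_def qone_def qzero_def)+

lemma qcnj_qmult: "qcnj (qmult a b) = qmult (qcnj b) (qcnj a)"
  by (rule quat_eqI) (simp_all add: qcnj_def qmult_def algebra_simps)

lemma qmult_qcnj_left_unit:
  assumes "qnorm2 a = 1" shows "qmult (qcnj a) a = qone"
  using assms by (intro quat_eqI) (auto simp: qcnj_def qmult_def qone_def qnorm2_def power2_eq_square)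

lemma qmult_qcnj_right_unit:
  assumes "qnorm2 a = 1" shows "qmult a (qcnj a) = qone"
  using assms by (intro quat_eqI) (auto simp: qcnj_def qmult_def qone_def qnorm2_def power2_eq_square)

definition qcomm :: "quat \<Rightarrow> quat \<Rightarrow> quat" where
  "qcomm a b = qmult (qmult a b) (qmult (qcnj a) (qcnj b))"

definition mantidiag :: "quat \<Rightarrow> quat \<Rightarrow> qmat" where
  "mantidiag x y = (qzero, x, y, qzero)"

lemma mone_eq_mdiag: "mone = mdiag qone qone"
  by (simp add: mone_def mdiag_def)

lemma Mb_eq_mantidiag: "Mb b = mantidiag b (qcnj b)"
  by (simp add: Mb_def mantidiag_def)

lemma mmult_mdiag_mdiag [simp]: "mmult (mdiag x y) (mdiag x' y') = mdiag (qmult x x') (qmult y y')"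
  and mmult_mdiag_mantidiag [simp]:
    "mmult (mdiag x y) (mantidiag x' y') = mantidiag (qmult x x') (qmult y y')"
  and mmult_mantidiag_mdiag [simp]:
    "mmult (mantidiag x y) (mdiag x' y') = mantidiag (qmult x y') (qmult y x')"
  and mmult_mantidiag_mantidiag [simp]:
    "mmult (mantidiag x y) (mantidiag x' y') = mdiag (qmult x y') (qmult y x')"
  by (simp_all add: mmult_def mdiag_def mantidiag_def)

lemma mstar_mdiag [simp]: "mstar (mdiag x y) = mdiag (qcnj x) (qcnj y)"
  and mstar_mantidiag [simp]: "mstar (mantidiag x y) = mantidiag (qcnj y) (qcnj x)"
  by (simp_all add: mstar_def mdiag_def mantidiag_def)

lemma qone_neq_qzero [simp]: "qone \<noteq> qzero"
  by (simp add: qone_def qzero_def)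

lemma mdiag_inject [simp]: "mdiag x y = mdiag x' y' \<longleftrightarrow> x = x' \<and> y = y'"
  and mdiag_eq_mantidiag_iff [simp]:
    "mdiag x y = mantidiag x' y' \<longleftrightarrow> x = qzero \<and> y = qzero \<and> x' = qzero \<and> y' = qzero"
  by (auto simp: mdiag_def mantidiag_def)

lemma mgen_least: "S \<subseteq> mgen T \<Longrightarrow> mgen S \<subseteq> mgen T"
proof
  fix m assume "S \<subseteq> mgen T" and "m \<in> mgen S"
  then show "m \<in> mgen T"
    by (induction rule: mgen.induct[OF \<open>m \<in> mgen S\<close>]) (auto intro: mgen.intros)
qed

lemma mdiag_swap_in_mgen:
  assumes "Mb qone \<in> mgen S" and "mdiag x y \<in> mgen S"
  shows "mdiag y x \<in> mgen S"
proof -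
  have "mmult (mmult (Mb qone) (mdiag x y)) (Mb qone) = mdiag y x"
    by (simp add: Mb_eq_mantidiag)
  then show ?thesis
    using assms by (metis mgen_mult)
qed

locale unit_quat_group =
  fixes K :: "quat set"
  assumes subgroup: "is_subgroup_UH K"
begin

abbreviation K' :: "quat set" where
  "K' \<equiv> commutator_subgroup K"

lemma one_in [simp]: "qone \<in> K"
  and mult_in [simp]: "a \<in> K \<Longrightarrow> b \<in> K \<Longrightarrow> qmult a b \<in> K"
  and cnj_in [simp]: "a \<in> K \<Longrightarrow> qcnj a \<in> K"
  and unit: "a \<in> K \<Longrightarrow> qnorm2 a = 1"
  using subgroup by (auto simp: is_subgroup_UH_def UH_def)

lemma cancel [simp]:
  assumes "a \<in> K"
  shows "qmult a (qcnj a) = qone" "qmult (qcnj a) a = qone"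
    "qmult a (qmult (qcnj a) z) = z" "qmult (qcnj a) (qmult a z) = z"
  using qmult_qcnj_left_unit qmult_qcnj_right_unit unit[OF assms]
  by (metis qmult_assoc qmult_one_left)+

lemma commutator_subgroup_is_subgroup: "is_subgroup_of K' K"
proof -
  have "K' \<subseteq> K"
  proof
    fix x assume "x \<in> K'"
    then show "x \<in> K"
      unfolding commutator_subgroup_def by induction auto
  qed
  then show ?thesis
    by (simp add: is_subgroup_of_def commutator_subgroup_def qgen.intros)
qed

lemma qcomm_in_commutator_subgroup: "a \<in> K \<Longrightarrow> b \<in> K \<Longrightarrow> qcomm a b \<in> K'"
  unfolding commutator_subgroup_def qcomm_def by (rule qgen_base) blast

lemma subgroup_above_commutator_is_normal:
  assumes H: "is_subgroup_of H K" "K' \<subseteq> H"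
  shows "is_normal_in H K"
  unfolding is_normal_in_def
proof (intro conjI ballI)
  fix k h assume k: "k \<in> K" and h: "h \<in> H"
  then have "h \<in> K"
    using H(1) by (auto simp: is_subgroup_of_def)
  then have "qmult (qmult k h) (qcnj k) = qmult (qcomm k h) h"
    by (simp add: qcomm_def qmult_assoc)
  then show "qmult (qmult k h) (qcnj k) \<in> H"
    using qcomm_in_commutator_subgroup[OF k \<open>h \<in> K\<close>] H h by (auto simp: is_subgroup_of_def)
qed (fact H(1))

lemma commutator_subgroup_is_normal: "is_normal_in K' K"
  using subgroup_above_commutator_is_normal commutator_subgroup_is_subgroup by blast

lemma commutator_subgroup_closed:
  shows "qone \<in> K'" "a \<in> K' \<Longrightarrow> b \<in> K' \<Longrightarrow> qmult a b \<in> K'" "a \<in> K' \<Longrightarrow> qcnj a \<in> K'"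
    and "a \<in> K' \<Longrightarrow> a \<in> K"
    and "k \<in> K \<Longrightarrow> a \<in> K' \<Longrightarrow> qmult (qmult k a) (qcnj k) \<in> K'"
  using commutator_subgroup_is_normal by (auto simp: is_normal_in_def is_subgroup_of_def)

text \<open>Adjacent factors commute modulo \<open>K'\<close>: \<open>u b a v = (u [b,a] u\<^sup>-\<^sup>1) (u a b v)\<close>.\<close>
lemma swap_mod_commutator_subgroup:
  assumes "u \<in> K" "a \<in> K" "b \<in> K" "v \<in> K"
    and "qmult u (qmult a (qmult b v)) \<in> K'"
  shows "qmult u (qmult b (qmult a v)) \<in> K'"
proof -
  have "qmult u (qmult b (qmult a v)) =
      qmult (qmult (qmult u (qcomm b a)) (qcnj u)) (qmult u (qmult a (qmult b v)))"
    using assms by (simp add: qcomm_def qmult_assoc)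
  then show ?thesis
    using assms qcomm_in_commutator_subgroup commutator_subgroup_closed by simp
qed

definition balanced :: "qmat set" where
  "balanced = {m. \<exists>x\<in>K. \<exists>y\<in>K. qmult x y \<in> K' \<and> (m = mdiag x y \<or> m = mantidiag x y)}"

lemma balancedI:
  assumes "x \<in> K" "y \<in> K" "qmult x y \<in> K'"
  shows "mdiag x y \<in> balanced" "mantidiag x y \<in> balanced"
  using assms by (auto simp: balanced_def)

lemma balanced_mult:
  assumes "m \<in> balanced" "m' \<in> balanced"
  shows "mmult m m' \<in> balanced"
proof -
  obtain x y x' y' where xy: "x \<in> K" "y \<in> K" "qmult x y \<in> K'"
    and xy': "x' \<in> K" "y' \<in> K" "qmult x' y' \<in> K'"
    and m: "m = mdiag x y \<or> m = mantidiag x y" and m': "m' = mdiag x' y' \<or> m' = mantidiag x' y'"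
    using assms by (auto simp: balanced_def)
  have xyx'y': "qmult x (qmult y (qmult x' y')) \<in> K'"
    using commutator_subgroup_closed(2)[OF xy(3) xy'(3)] by (simp add: qmult_assoc)
  have "qmult x (qmult x' (qmult y y')) \<in> K'"
    using swap_mod_commutator_subgroup[of x y x' y'] xyx'y' xy xy' by simp
  moreover have "qmult x (qmult y' (qmult y x')) \<in> K'"
  proof -
    have "qmult (qmult x y) (qmult y' (qmult x' qone)) \<in> K'"
      using swap_mod_commutator_subgroup[of "qmult x y" x' y' qone] xyx'y' xy xy'
      by (simp add: qmult_assoc)
    then show ?thesis
      using swap_mod_commutator_subgroup[of x y y' x'] xy xy' by (simp add: qmult_assoc)
  qed
  ultimately show ?thesis
    using m m' xy xy' balancedI[of "qmult x x'" "qmult y y'"] balancedI[of "qmult x y'" "qmult y x'"]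
    by (auto simp: qmult_assoc)
qed

lemma balanced_mstar:
  assumes "m \<in> balanced"
  shows "mstar m \<in> balanced"
proof -
  obtain x y where xy: "x \<in> K" "y \<in> K" "qmult x y \<in> K'"
    and m: "m = mdiag x y \<or> m = mantidiag x y"
    using assms by (auto simp: balanced_def)
  have "qmult y x \<in> K'"
    using swap_mod_commutator_subgroup[of qone x y qone] xy by simp
  then have "qmult (qcnj x) (qcnj y) \<in> K'" "qmult (qcnj y) (qcnj x) \<in> K'"
    using xy commutator_subgroup_closed(3) by (metis qcnj_qmult)+
  then show ?thesis
    using m xy balancedI[of "qcnj x" "qcnj y"] balancedI[of "qcnj y" "qcnj x"] by auto
qed

lemma mgen_Mb_balanced: "mgen (Mb ` K) \<subseteq> balanced"
proof
  fix m assume "m \<in> mgen (Mb ` K)"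
  then show "m \<in> balanced"
  proof induction
    case mgen_one
    then show ?case
      using commutator_subgroup_closed(1) by (auto simp: mone_eq_mdiag intro: balancedI)
  next
    case (mgen_base m)
    then show ?case
      using commutator_subgroup_closed(1) by (auto simp: Mb_eq_mantidiag intro: balancedI)
  qed (simp_all add: balanced_mult balanced_mstar)
qed

lemma H_L_subset_commutator_subgroup: "H_L K K \<subseteq> K'"
  using mgen_Mb_balanced by (auto simp: H_L_def balanced_def)

lemma mdiag_qcomm_in_mgen_Mb:
  assumes x: "x \<in> K" and y: "y \<in> K"
  shows "mdiag (qcomm x (qcnj y)) qone \<in> mgen (Mb ` K)"
proof -
  define k where "k = qmult (qcnj x) y"
  have Mb_in: "Mb b \<in> mgen (Mb ` K)" if "b \<in> K" for b
    using that by (simp add: mgen_base)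
  have "mdiag (qmult x (qcnj y)) k \<in> mgen (Mb ` K)"
    using mgen_mult[OF Mb_in[OF x] Mb_in[OF y]] by (simp add: Mb_eq_mantidiag k_def)
  moreover have "mdiag k (qcnj k) \<in> mgen (Mb ` K)"
    using mgen_mult[OF Mb_in Mb_in[OF one_in], of k] x y by (simp add: Mb_eq_mantidiag k_def)
  ultimately have "mmult (mdiag (qmult x (qcnj y)) k) (mdiag k (qcnj k)) \<in> mgen (Mb ` K)"
    by (rule mgen_mult)
  moreover have "k \<in> K"
    using x y by (simp add: k_def)
  ultimately show ?thesis
    using x y by (simp add: qcomm_def k_def qmult_assoc qcnj_qmult)
qed

lemma commutator_subgroup_subset_H_L: "K' \<subseteq> H_L K K"
proof
  fix h assume h: "h \<in> K'"
  then have "mdiag h qone \<in> mgen (Mb ` K)"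
    unfolding commutator_subgroup_def
  proof induction
    case qgen_one
    then show ?case
      by (metis mgen_one mone_eq_mdiag)
  next
    case (qgen_base s)
    then obtain a b where "a \<in> K" "b \<in> K" "s = qcomm a b"
      by (auto simp: qcomm_def)
    then show ?case
      using mdiag_qcomm_in_mgen_Mb[of a "qcnj b"] by simp
  next
    case (qgen_mult a b)
    then show ?case
      using mgen_mult[of "mdiag a qone" _ "mdiag b qone"] by simp
  next
    case (qgen_inv a)
    then show ?case
      using mgen_inv[of "mdiag a qone"] by simp
  qed
  then show "h \<in> H_L K K"
    using h commutator_subgroup_closed(4) by (simp add: H_L_def)
qed

theorem H_L_eq_commutator_subgroup: "H_L K K = K'"
  using H_L_subset_commutator_subgroup commutator_subgroup_subset_H_L by blast

lemma canonical_form_full: "canonical_form K K H"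
  by (auto simp: canonical_form_def G_KLH_def intro: mgen_base)

lemma G_KLH_normal_eq_G_KLH_above_commutator:
  assumes "is_normal_in H' K"
  obtains H where "is_subgroup_of H K" "K' \<subseteq> H" "G_KLH K K H' = G_KLH K K H"
proof
  let ?G = "G_KLH K K H'"
  define H where "H = {h \<in> K. mdiag h qone \<in> ?G}"
  have Mb_in: "Mb b \<in> ?G" if "b \<in> K" for b
    using that by (auto simp: G_KLH_def intro: mgen_base)
  have H'_sub: "H' \<subseteq> H"
    using assms by (auto simp: H_def is_normal_in_def is_subgroup_of_def G_KLH_def intro: mgen_base)
  show "is_subgroup_of H K"
    unfolding is_subgroup_of_def H_def
    using mgen_one[of "_ ` H' \<union> _ ` H' \<union> Mb ` K"]
    by (auto simp: G_KLH_def mone_eq_mdiag dest: mgen_mult mgen_inv)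
  have "mgen (Mb ` K) \<subseteq> ?G"
    using Mb_in unfolding G_KLH_def by (intro mgen_least) blast
  then show "K' \<subseteq> H"
    using H_L_eq_commutator_subgroup by (auto simp: H_L_def H_def)
  have "?G \<subseteq> G_KLH K K H"
    unfolding G_KLH_def using H'_sub by (intro mgen_least) (blast intro: mgen_base)
  moreover have "G_KLH K K H \<subseteq> ?G"
    unfolding G_KLH_def
    using H_def Mb_in mdiag_swap_in_mgen[of _ _ qone] one_in
    by (intro mgen_least) (auto simp: G_KLH_def)
  ultimately show "G_KLH K K H' = G_KLH K K H" ..
qed

end

theorem lemma4p2:
  assumes "finite K" and "is_subgroup_UH K"
  shows "H_L K K = commutator_subgroup K
    \<and> (\<forall>H. is_subgroup_of H K \<and> commutator_subgroup K \<subseteq> H \<longrightarrow>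
            is_normal_in H K \<and> canonical_form K K H)
    \<and> (\<forall>H'. is_normal_in H' K \<longrightarrow>
            (\<exists>H. is_subgroup_of H K \<and> commutator_subgroup K \<subseteq> H \<and>
                 G_KLH K K H' = G_KLH K K H))"
proof -
  interpret unit_quat_group K
    using assms(2) by unfold_locales
  show ?thesis
    using H_L_eq_commutator_subgroup subgroup_above_commutator_is_normal canonical_form_full
      G_KLH_normal_eq_G_KLH_above_commutator by metis
qed

end
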